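(* Let $K$ be the field of fractions of a complete discrete valuation ring $\mathcal{O}$, and suppose $K$ has characteristic $3$ (the residue field may be infinite). In the coefficient-choosing game of degree $d = 3$ over $K$, whichever player makes the last move has a winning strategy.
   Context: The coefficient-choosing game of degree $d$ over $K$: Nora and Wanda alternately choose coefficients of $f(x) = a_d x^d + \cdots + a_0$; on each move the current player picks a not-yet-chosen coefficient and assigns it a value in $K$, subject to $a_d \neq 0$, $a_0 \neq 0$. After all $d+1$ coefficients are chosen, Wanda wins if $f$ has a root in $K$, and Nora wins otherwise. Who moves first is fixed in advance. *)

theory Defs
  imports "HOL-Computational_Algebra.Polynomial"
begin

text \<open>We encode a discrete valuation on a field K as a
  function v :: K => int whose value at 0 is irrelevant (morally v 0 = infinity).\<close>

definition discrete_valuation :: "('a::field \<Rightarrow> int) \<Rightarrow> bool" where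
  "discrete_valuation v \<longleftrightarrow>
     (\<forall>x y. x \<noteq> 0 \<longrightarrow> y \<noteq> 0 \<longrightarrow> v (x * y) = v x + v y) \<and>
     (\<forall>x y. x \<noteq> 0 \<longrightarrow> y \<noteq> 0 \<longrightarrow> x + y \<noteq> 0 \<longrightarrow> v (x + y) \<ge> min (v x) (v y)) \<and>
     (\<forall>n. \<exists>x. x \<noteq> 0 \<and> v x = n)"

definition val_ring :: "('a::field \<Rightarrow> int) \<Rightarrow> 'a set" where
  "val_ring v = {x. x = 0 \<or> v x \<ge> 0}"

definition val_close :: "('a::field \<Rightarrow> int) \<Rightarrow> int \<Rightarrow> 'a \<Rightarrow> 'a \<Rightarrow> bool" where
  "val_close v N x y \<longleftrightarrow> x = y \<or> v (x - y) \<ge> N"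

definition complete_dvr_fraction_field :: "('a::field \<Rightarrow> int) \<Rightarrow> bool" where
  "complete_dvr_fraction_field v \<longleftrightarrow> discrete_valuation v \<and>
     (\<forall>s :: nat \<Rightarrow> 'a. (\<forall>n. s n \<in> val_ring v) \<longrightarrow>
        (\<forall>N. \<exists>M. \<forall>m\<ge>M. \<forall>n\<ge>M. val_close v N (s m) (s n)) \<longrightarrow>
        (\<exists>l \<in> val_ring v. \<forall>N. \<exists>M. \<forall>n\<ge>M. val_close v N (s n) l))"

text \<open>The coefficient-choosing game of degree d. A position is a partial assignment
  c :: nat => 'a option of the coefficients a_0, ..., a_d.\<close>

datatype player = Nora | Wanda

fun other :: "player \<Rightarrow> player" where
  "other Nora = Wanda" | "other Wanda = Nora"

definition legal_move :: "nat \<Rightarrow> (nat \<Rightarrow> 'a::field option) \<Rightarrow> nat \<Rightarrow> 'a \<Rightarrow> bool" where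
  "legal_move d c i x \<longleftrightarrow> i \<le> d \<and> c i = None \<and> ((i = d \<or> i = 0) \<longrightarrow> x \<noteq> 0)"

definition final_poly :: "nat \<Rightarrow> (nat \<Rightarrow> 'a::field option) \<Rightarrow> 'a poly" where
  "final_poly d c = (\<Sum>i\<le>d. monom (the (c i)) i)"

definition has_root_in_field :: "'a::field poly \<Rightarrow> bool" where
  "has_root_in_field f \<longleftrightarrow> (\<exists>x. poly f x = 0)"

fun win :: "nat \<Rightarrow> ((nat \<Rightarrow> 'a::field option) \<Rightarrow> bool) \<Rightarrow> nat \<Rightarrow> (nat \<Rightarrow> 'a option)
            \<Rightarrow> player \<Rightarrow> player \<Rightarrow> bool" where
  "win d goal 0 c mover me = goal c"
| "win d goal (Suc k) c mover me =
     (if mover = me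
      then (\<exists>i x. legal_move d c i x \<and> win d goal k (c(i := Some x)) (other mover) me)
      else (\<forall>i x. legal_move d c i x \<longrightarrow> win d goal k (c(i := Some x)) (other mover) me))"

definition wanda_goal :: "nat \<Rightarrow> (nat \<Rightarrow> 'a::field option) \<Rightarrow> bool" where
  "wanda_goal d c \<longleftrightarrow> has_root_in_field (final_poly d c)"

definition nora_goal :: "nat \<Rightarrow> (nat \<Rightarrow> 'a::field option) \<Rightarrow> bool" where
  "nora_goal d c \<longleftrightarrow> \<not> has_root_in_field (final_poly d c)"

definition has_winning_strategy :: "'a::field itself \<Rightarrow> nat \<Rightarrow> player \<Rightarrow> player \<Rightarrow> bool" where
  "has_winning_strategy T d first p =
     win d (if p = Wanda then (wanda_goal d :: (nat \<Rightarrow> 'a option) \<Rightarrow> bool) else nora_goal d)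
         (d + 1) (\<lambda>_. None) first p"

definition last_mover :: "nat \<Rightarrow> player \<Rightarrow> player" where
  "last_mover d first = (if even d then first else other first)"

end

theory Submission
  imports Defs
begin

text \<open>Wanda, moving last, only needs \<open>K\<close> to be infinite: for the remaining coefficient \<open>a\<^sub>i\<close>
  she takes \<open>r \<noteq> 0\<close> that is not a root of the polynomial \<open>q\<close> with \<open>a\<^sub>i = 0\<close> and sets
  \<open>a\<^sub>i = - q(r) / r\<^sup>i\<close>, which is nonzero and hence a legal move.

  Nora, moving last, answers Wanda's first move by setting \<open>a\<^sub>1\<close> or \<open>a\<^sub>2\<close> to \<open>0\<close>. Her final
  move then either chooses \<open>a\<^sub>0\<close> (resp. \<open>a\<^sub>3\<close>) of valuation \<open>\<equiv> 1 mod 3\<close> and so far from the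
  others that at every \<open>r\<close> a single term has least valuation, or completes
  \<open>a\<^sub>3 r\<^sup>3 + a\<^sub>1 r + a\<^sub>0\<close> (up to reversing the coefficients). There \<open>a\<^sub>1 = 0\<close> works unless
  \<open>-a\<^sub>0/a\<^sub>3 = s\<^sup>3\<close>, and then \<open>a\<^sub>1 = a\<^sub>3 \<pi> s\<^sup>2\<close> turns the cubic into a multiple of
  \<open>z\<^sup>3 + \<pi> z - 1\<close>, \<open>z = r / s\<close>, which has no root because \<open>z\<^sup>3 - 1 = (z - 1)\<^sup>3\<close> in
  characteristic 3.\<close>

lemma discrete_valuation_mult:
  "discrete_valuation v \<Longrightarrow> x \<noteq> 0 \<Longrightarrow> y \<noteq> 0 \<Longrightarrow> v (x * y) = v x + v y"
  unfolding discrete_valuation_def by blast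

lemma discrete_valuation_add:
  "discrete_valuation v \<Longrightarrow> x \<noteq> 0 \<Longrightarrow> y \<noteq> 0 \<Longrightarrow> x + y \<noteq> 0 \<Longrightarrow> min (v x) (v y) \<le> v (x + y)"
  unfolding discrete_valuation_def by blast

lemma discrete_valuation_surj: "discrete_valuation v \<Longrightarrow> \<exists>x. x \<noteq> 0 \<and> v x = n"
  unfolding discrete_valuation_def by blast

lemma discrete_valuation_one:
  fixes v :: "'a::field \<Rightarrow> int"
  assumes "discrete_valuation v" shows "v 1 = 0"
  using discrete_valuation_mult[OF assms, of 1 1] by simp

lemma discrete_valuation_minus_one:
  fixes v :: "'a::field \<Rightarrow> int"
  assumes "discrete_valuation v" shows "v (- 1) = 0"
  using discrete_valuation_mult[OF assms, of "- 1" "- 1"] discrete_valuation_one[OF assms] by simp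

lemma discrete_valuation_uminus:
  fixes v :: "'a::field \<Rightarrow> int"
  assumes "discrete_valuation v" "x \<noteq> 0" shows "v (- x) = v x"
  using discrete_valuation_mult[OF assms(1), of "- 1" x] discrete_valuation_minus_one[OF assms(1)] assms(2)
  by simp

lemma discrete_valuation_power:
  fixes v :: "'a::field \<Rightarrow> int"
  assumes "discrete_valuation v" "x \<noteq> 0" shows "v (x ^ n) = int n * v x"
proof (induction n)
  case 0
  then show ?case using discrete_valuation_one[OF assms(1)] by simp
next
  case (Suc n)
  then show ?case using discrete_valuation_mult[OF assms(1), of x "x ^ n"] assms(2) by (simp add: algebra_simps)
qed

lemma discrete_valuation_add_dominated:
  fixes v :: "'a::field \<Rightarrow> int"
  assumes "discrete_valuation v" "y = 0 \<or> v x < v y" "z = 0 \<or> v x < v z"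
  shows "y + z = 0 \<or> v x < v (y + z)"
  using discrete_valuation_add[OF assms(1), of y z] assms(2,3) by fastforce

lemma discrete_valuation_add_nonzero:
  fixes v :: "'a::field \<Rightarrow> int"
  assumes "discrete_valuation v" "x \<noteq> 0" "y = 0 \<or> v y \<noteq> v x"
  shows "x + y \<noteq> 0"
proof
  assume "x + y = 0"
  then have "y = - x" by (simp add: eq_neg_iff_add_eq_0 add.commute)
  then show False using assms discrete_valuation_uminus[OF assms(1,2)] by simp
qed

lemma discrete_valuation_infinite:
  fixes v :: "'a::field \<Rightarrow> int"
  assumes "discrete_valuation v" shows "infinite (UNIV :: 'a set)"
proof
  assume "finite (UNIV :: 'a set)"
  then have "finite (range v)" by simp
  moreover have "range v = UNIV" using discrete_valuation_surj[OF assms] by (metis UNIV_eq_I range_eqI)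
  ultimately show False by simp
qed

definition rootless_cubic :: "'a::field \<Rightarrow> 'a \<Rightarrow> 'a \<Rightarrow> 'a \<Rightarrow> bool" where
  "rootless_cubic a0 a1 a2 a3 \<longleftrightarrow> (\<forall>r. a0 + a1 * r + a2 * r ^ 2 + a3 * r ^ 3 \<noteq> 0)"

lemma rootless_cubic_reverse:
  assumes "a0 \<noteq> 0" "rootless_cubic a3 a2 a1 a0"
  shows "rootless_cubic a0 a1 a2 a3"
  unfolding rootless_cubic_def
proof (intro allI notI)
  fix r assume root: "a0 + a1 * r + a2 * r ^ 2 + a3 * r ^ 3 = 0"
  then have "r \<noteq> 0" using assms(1) by auto
  then have "a3 + a2 * (1 / r) + a1 * (1 / r) ^ 2 + a0 * (1 / r) ^ 3
      = (a0 + a1 * r + a2 * r ^ 2 + a3 * r ^ 3) / r ^ 3"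
    by (simp add: field_simps power2_eq_square power3_eq_cube)
  moreover have "a3 + a2 * (1 / r) + a1 * (1 / r) ^ 2 + a0 * (1 / r) ^ 3 \<noteq> 0"
    using assms(2) unfolding rootless_cubic_def by blast
  ultimately show False using root by simp
qed

text \<open>The Newton polygon of the result is a single segment of slope not in \<open>\<int>\<close>.\<close>
lemma rootless_cubic_choose_constant:
  fixes v :: "'a::field \<Rightarrow> int" and a1 a2 a3 :: 'a
  assumes dv: "discrete_valuation v" and a3: "a3 \<noteq> 0"
  shows "\<exists>a0. a0 \<noteq> 0 \<and> rootless_cubic a0 a1 a2 a3"
proof -
  define K where "K = \<bar>v a1 - v a3\<bar> + \<bar>v a2 - v a3\<bar>"
  obtain e where e: "e \<noteq> 0" "v e = - 3 * K - 2" using discrete_valuation_surj[OF dv] by blast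
  define a0 where "a0 = a3 * e"
  have a0: "a0 \<noteq> 0" "v a0 = v a3 - 3 * K - 2"
    unfolding a0_def using discrete_valuation_mult[OF dv a3 e(1)] a3 e by auto
  have "a0 + a1 * r + a2 * r ^ 2 + a3 * r ^ 3 \<noteq> 0" for r
  proof (cases "r = 0")
    case True
    then show ?thesis using a0 by simp
  next
    case r: False
    define w where "w = v r"
    have v3: "v (a3 * r ^ 3) = v a3 + 3 * w" and t3: "a3 * r ^ 3 \<noteq> 0"
      using discrete_valuation_mult[OF dv a3, of "r ^ 3"] discrete_valuation_power[OF dv r, of 3] a3 r
      unfolding w_def by auto
    have v2: "a2 * r ^ 2 = 0 \<or> v (a2 * r ^ 2) = v a2 + 2 * w"
      using discrete_valuation_mult[OF dv, of a2 "r ^ 2"] discrete_valuation_power[OF dv r, of 2] r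
      unfolding w_def by auto
    have v1: "a1 * r = 0 \<or> v (a1 * r) = v a1 + w"
      using discrete_valuation_mult[OF dv, of a1 r] r unfolding w_def by auto
    have K: "\<bar>v a1 - v a3\<bar> \<le> K" "\<bar>v a2 - v a3\<bar> \<le> K" unfolding K_def by auto
    have "3 * w \<noteq> - 3 * K - 2" by presburger
    then consider "3 * w < - 3 * K - 2" | "- 3 * K - 2 < 3 * w" by linarith
    then show ?thesis
    proof cases
      case 1
      then have "w \<le> - K - 1" by presburger
      then have "a0 = 0 \<or> v (a3 * r ^ 3) < v a0" "a1 * r = 0 \<or> v (a3 * r ^ 3) < v (a1 * r)"
          "a2 * r ^ 2 = 0 \<or> v (a3 * r ^ 3) < v (a2 * r ^ 2)"
        using a0 v1 v2 v3 K 1 by auto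
      then have "a0 + a1 * r + a2 * r ^ 2 = 0 \<or> v (a3 * r ^ 3) < v (a0 + a1 * r + a2 * r ^ 2)"
        using discrete_valuation_add_dominated[OF dv] by metis
      then have "a3 * r ^ 3 + (a0 + a1 * r + a2 * r ^ 2) \<noteq> 0"
        using discrete_valuation_add_nonzero[OF dv t3] by fastforce
      then show ?thesis by (simp add: algebra_simps)
    next
      case 2
      then have "- K \<le> w" by presburger
      then have "a1 * r = 0 \<or> v a0 < v (a1 * r)" "a2 * r ^ 2 = 0 \<or> v a0 < v (a2 * r ^ 2)"
          "a3 * r ^ 3 = 0 \<or> v a0 < v (a3 * r ^ 3)"
        using a0 v1 v2 v3 K 2 by auto
      then have "a1 * r + a2 * r ^ 2 + a3 * r ^ 3 = 0 \<or> v a0 < v (a1 * r + a2 * r ^ 2 + a3 * r ^ 3)"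
        using discrete_valuation_add_dominated[OF dv] by metis
      then have "a0 + (a1 * r + a2 * r ^ 2 + a3 * r ^ 3) \<noteq> 0"
        using discrete_valuation_add_nonzero[OF dv a0(1)] by fastforce
      then show ?thesis by (simp add: algebra_simps)
    qed
  qed
  then show ?thesis using a0(1) unfolding rootless_cubic_def by blast
qed

lemma rootless_cubic_choose_leading:
  fixes v :: "'a::field \<Rightarrow> int" and a0 a1 a2 :: 'a
  assumes "discrete_valuation v" "a0 \<noteq> 0"
  shows "\<exists>a3. a3 \<noteq> 0 \<and> rootless_cubic a0 a1 a2 a3"
  using rootless_cubic_choose_constant[OF assms, of a2 a1] rootless_cubic_reverse[OF assms(2)] by blast

lemma cube_plus_uniformizer_no_root:
  fixes v :: "'a::field \<Rightarrow> int"
  assumes dv: "discrete_valuation v" and p: "p \<noteq> 0" "v p = 1" and char3: "(3::'a) = 0"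
  shows "z ^ 3 + p * z - 1 \<noteq> 0"
proof (cases "z = 0")
  case True
  then show ?thesis by simp
next
  case z: False
  have vz3: "v (z ^ 3) = 3 * v z" and z3: "z ^ 3 \<noteq> 0"
    using discrete_valuation_power[OF dv z] z by auto
  have vpz: "v (p * z) = 1 + v z" and pz: "p * z \<noteq> 0"
    using discrete_valuation_mult[OF dv p(1) z] p z by auto
  note v1 = discrete_valuation_minus_one[OF dv]
  consider "v z < 0" | "0 < v z" | "v z = 0" by linarith
  then show ?thesis
  proof cases
    case 1
    then have "p * z + - 1 = 0 \<or> v (z ^ 3) < v (p * z + - 1)"
      using discrete_valuation_add_dominated[OF dv, of "p * z" "z ^ 3" "- 1"] vz3 vpz v1 by simp
    then have "z ^ 3 + (p * z + - 1) \<noteq> 0"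
      using discrete_valuation_add_nonzero[OF dv z3] by fastforce
    then show ?thesis by (simp add: algebra_simps)
  next
    case 2
    then have "z ^ 3 + p * z = 0 \<or> v (- 1 :: 'a) < v (z ^ 3 + p * z)"
      using discrete_valuation_add_dominated[OF dv, of "z ^ 3" "- 1" "p * z"] vz3 vpz v1 by simp
    then have "- 1 + (z ^ 3 + p * z) \<noteq> 0"
      using discrete_valuation_add_nonzero[OF dv, of "- 1"] by fastforce
    then show ?thesis by (simp add: algebra_simps)
  next
    case 3
    have "(z - 1) ^ 3 = z ^ 3 - 1 - 3 * z ^ 2 + 3 * z"
      by (simp add: power3_eq_cube power2_eq_square algebra_simps)
    then have "z ^ 3 + p * z - 1 = p * z + (z - 1) ^ 3" using char3 by simp
    moreover have "(z - 1) ^ 3 = 0 \<or> v ((z - 1) ^ 3) \<noteq> v (p * z)"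
    proof (cases "z = 1")
      case False
      then have "v ((z - 1) ^ 3) = 3 * v (z - 1)" using discrete_valuation_power[OF dv, of "z - 1" 3] by simp
      then have "v ((z - 1) ^ 3) \<noteq> v (p * z)" using vpz 3 by presburger
      then show ?thesis by simp
    qed simp
    ultimately show ?thesis using discrete_valuation_add_nonzero[OF dv pz] by metis
  qed
qed

lemma rootless_cubic_choose_linear:
  fixes v :: "'a::field \<Rightarrow> int" and a0 a3 :: 'a
  assumes dv: "discrete_valuation v" and char3: "(3::'a) = 0" and "a0 \<noteq> 0" "a3 \<noteq> 0"
  shows "\<exists>a1. rootless_cubic a0 a1 0 a3"
proof (cases "\<exists>s. - a0 / a3 = s ^ 3")
  case True
  then obtain s where s: "- a0 / a3 = s ^ 3" by blast
  then have "- a0 = a3 * s ^ 3" using assms(4) by (simp add: field_simps)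
  then have a0: "a0 = - (a3 * s ^ 3)" by (metis minus_minus)
  then have "s \<noteq> 0" using assms(3) by auto
  obtain p :: 'a where p: "p \<noteq> 0" "v p = 1" using discrete_valuation_surj[OF dv] by blast
  have "a0 + a3 * p * s ^ 2 * r + 0 * r ^ 2 + a3 * r ^ 3 \<noteq> 0" for r
  proof -
    have "a0 + a3 * p * s ^ 2 * r + 0 * r ^ 2 + a3 * r ^ 3 = a3 * s ^ 3 * ((r / s) ^ 3 + p * (r / s) - 1)"
      using \<open>s \<noteq> 0\<close> unfolding a0 by (simp add: field_simps power3_eq_cube power2_eq_square)
    then show ?thesis
      using cube_plus_uniformizer_no_root[OF dv p char3, of "r / s"] \<open>s \<noteq> 0\<close> assms(4) by simp
  qed
  then have "rootless_cubic a0 (a3 * p * s ^ 2) 0 a3" unfolding rootless_cubic_def by blast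
  then show ?thesis by blast
next
  case False
  have "rootless_cubic a0 0 0 a3"
    unfolding rootless_cubic_def
  proof (intro allI notI)
    fix r assume "a0 + 0 * r + 0 * r ^ 2 + a3 * r ^ 3 = 0"
    then have "- a0 / a3 = r ^ 3" using assms(4) by (simp add: field_simps add_eq_0_iff)
    then show False using False by blast
  qed
  then show ?thesis by blast
qed

lemma rootless_cubic_choose_quadratic:
  fixes v :: "'a::field \<Rightarrow> int" and a0 a3 :: 'a
  assumes "discrete_valuation v" "(3::'a) = 0" "a0 \<noteq> 0" "a3 \<noteq> 0"
  shows "\<exists>a2. rootless_cubic a0 0 a2 a3"
  using rootless_cubic_choose_linear[OF assms(1,2,4,3)] rootless_cubic_reverse[OF assms(3)] by blast


definition game_position :: "nat \<Rightarrow> (nat \<Rightarrow> 'a::field option) \<Rightarrow> nat \<Rightarrow> bool" where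
  "game_position d c n \<longleftrightarrow>
     card {i. i \<le> d \<and> c i = None} = n \<and> c 0 \<noteq> Some 0 \<and> c d \<noteq> Some 0"

lemma game_position_start: "game_position d (\<lambda>_. None :: 'a::field option) (Suc d)"
  unfolding game_position_def by simp

lemma game_position_move:
  assumes "game_position d c (Suc n)" "legal_move d c i x"
  shows "game_position d (c(i := Some x)) n"
proof -
  have "{j. j \<le> d \<and> (c(i := Some x)) j = None} = {j. j \<le> d \<and> c j = None} - {i}" by auto
  moreover have "i \<in> {j. j \<le> d \<and> c j = None}" using assms(2) unfolding legal_move_def by auto
  ultimately show ?thesis using assms unfolding game_position_def legal_move_def by auto
qed

lemma game_position_legal_move:
  assumes "game_position d c (Suc n)"
  obtains i where "legal_move d c i (1 :: 'a::field)"
proof -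
  have "{i. i \<le> d \<and> c i = None} \<noteq> {}"
    using assms unfolding game_position_def by (metis card.empty nat.distinct(1))
  then show ?thesis using that unfolding legal_move_def by auto
qed

lemma game_position_last_slot:
  assumes "game_position d c (Suc 0)"
  obtains i where "i \<le> d" "c i = None" "\<And>j. j \<le> d \<Longrightarrow> j \<noteq> i \<Longrightarrow> c j = Some (the (c j))"
proof -
  have "card {j. j \<le> d \<and> c j = None} = 1" using assms unfolding game_position_def by simp
  then obtain i where "{j. j \<le> d \<and> c j = None} = {i}" by (rule card_1_singletonE)
  then show ?thesis using that by (metis (mono_tags, lifting) insertI1 mem_Collect_eq option.collapse singleton_iff)
qed

lemma other_eq_iff: "other p = q \<longleftrightarrow> p \<noteq> q"
  by (cases p; cases q) simp_all

lemma win_by_last_move: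
  assumes last: "\<And>c. game_position d c (Suc 0) \<Longrightarrow> win d goal (Suc 0) c me me"
    and "game_position d c k" "0 < k" "mover = me \<longleftrightarrow> odd k"
  shows "win d goal k c mover me"
  using assms(2-)
proof (induction k arbitrary: c mover)
  case (Suc k)
  show ?case
  proof (cases "k = 0")
    case True
    then show ?thesis using Suc.prems last by simp
  next
    case False
    have "other mover = me \<longleftrightarrow> odd k" using Suc.prems(3) by (auto simp: other_eq_iff)
    moreover have "0 < k" using \<open>k \<noteq> 0\<close> by simp
    ultimately have IH: "win d goal k (c(i := Some x)) (other mover) me" if "legal_move d c i x" for i x
      using Suc.IH[OF game_position_move[OF Suc.prems(1) that]] by blast
    obtain i where "legal_move d c i 1" using game_position_legal_move[OF Suc.prems(1)] .
    then show ?thesis using IH by auto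
  qed
qed simp

lemma poly_final_poly: "poly (final_poly d c) r = (\<Sum>k\<le>d. the (c k) * r ^ k)"
  unfolding final_poly_def poly_sum poly_monom ..

lemma coeff_final_poly: "k \<le> d \<Longrightarrow> coeff (final_poly d c) k = the (c k)"
  unfolding final_poly_def coeff_sum coeff_monom by simp

lemma poly_final_poly_update:
  assumes "i \<le> d"
  shows "poly (final_poly d (c(i := Some x))) r = poly (final_poly d (c(i := Some 0))) r + x * r ^ i"
proof -
  have "(\<Sum>k\<le>d. the ((c(i := Some x)) k) * r ^ k)
      = (\<Sum>k\<le>d. the ((c(i := Some 0)) k) * r ^ k + (if k = i then x * r ^ i else 0))"
    by (intro sum.cong) auto
  then show ?thesis using assms unfolding poly_final_poly by (simp add: sum.distrib)
qed

lemma last_move_creates_root: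
  assumes inf: "infinite (UNIV :: 'a::field set)" and "0 < d"
    and pos: "game_position d (c :: nat \<Rightarrow> 'a option) (Suc 0)"
  shows "win d (wanda_goal d) (Suc 0) c Wanda Wanda"
proof -
  obtain i where i: "i \<le> d" "c i = None" and set: "\<And>j. j \<le> d \<Longrightarrow> j \<noteq> i \<Longrightarrow> c j = Some (the (c j))"
    using game_position_last_slot[OF pos] by blast
  define q where "q = final_poly d (c(i := Some 0))"
  have "q \<noteq> 0"
  proof (cases "i = 0")
    case True
    then have "coeff q d = the (c d)" "c d = Some (the (c d))"
      using \<open>0 < d\<close> set[of d] unfolding q_def by (auto simp: coeff_final_poly)
    then show ?thesis using pos unfolding game_position_def by (metis coeff_0)
  next
    case False
    then have "coeff q 0 = the (c 0)" "c 0 = Some (the (c 0))"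
      using set[of 0] unfolding q_def by (auto simp: coeff_final_poly)
    then show ?thesis using pos unfolding game_position_def by (metis coeff_0)
  qed
  then have "finite (insert 0 {r. poly q r = 0})" using poly_roots_finite by blast
  then obtain r where r: "r \<noteq> 0" "poly q r \<noteq> 0" using ex_new_if_finite[OF inf] by blast
  define x where "x = - poly q r / r ^ i"
  have "legal_move d c i x" using i r unfolding legal_move_def x_def by simp
  moreover have "poly (final_poly d (c(i := Some x))) r = 0"
    using r unfolding poly_final_poly_update[OF i(1)] q_def[symmetric] x_def by simp
  ultimately show ?thesis unfolding wanda_goal_def has_root_in_field_def by auto
qed

lemma wanda_wins_moving_last:
  assumes "infinite (UNIV :: 'a::field set)" "0 < d" "last_mover d first = Wanda"
  shows "has_winning_strategy TYPE('a) d first Wanda"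
proof -
  have "first = Wanda \<longleftrightarrow> odd (Suc d)"
    using assms(3) unfolding last_mover_def by (cases first; cases "even d") auto
  then show ?thesis
    unfolding has_winning_strategy_def
    using win_by_last_move[OF last_move_creates_root[OF assms(1,2)] game_position_start] by simp
qed

lemma nora_goal_rootless_cubic:
  "nora_goal 3 c \<longleftrightarrow> rootless_cubic (the (c 0)) (the (c 1)) (the (c 2)) (the (c 3))"
  unfolding nora_goal_def has_root_in_field_def rootless_cubic_def poly_final_poly
  by (simp add: numeral_3_eq_3 numeral_2_eq_2 atMost_Suc algebra_simps)

lemma nora_last_move_rootless:
  fixes v :: "'a::field \<Rightarrow> int"
  assumes dv: "discrete_valuation v" and char3: "(3::'a) = 0"
    and pos: "game_position 3 (c :: nat \<Rightarrow> 'a option) (Suc 0)"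
    and middle: "c 1 = Some 0 \<or> c 2 = Some 0"
  shows "win 3 (nora_goal 3) (Suc 0) c Nora Nora"
proof -
  obtain k where k: "k \<le> 3" "c k = None" and set: "\<And>j. j \<le> 3 \<Longrightarrow> j \<noteq> k \<Longrightarrow> c j = Some (the (c j))"
    using game_position_last_slot[OF pos] by blast
  have a0: "k \<noteq> 0 \<Longrightarrow> the (c 0) \<noteq> 0" and a3: "k \<noteq> 3 \<Longrightarrow> the (c 3) \<noteq> 0"
    using pos set[of 0] set[of 3] unfolding game_position_def by force+
  have "\<exists>x. legal_move 3 c k x \<and> nora_goal 3 (c(k := Some x))"
  proof -
    consider "k = 0" | "k = 1" | "k = 2" | "k = 3" using k(1) by linarith
    then show ?thesis
    proof cases
      case 1
      then show ?thesis
        using rootless_cubic_choose_constant[OF dv a3] k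
        by (auto simp: legal_move_def nora_goal_rootless_cubic)
    next
      case 2
      then show ?thesis
        using rootless_cubic_choose_linear[OF dv char3 a0 a3] k middle
        by (auto simp: legal_move_def nora_goal_rootless_cubic)
    next
      case 3
      then show ?thesis
        using rootless_cubic_choose_quadratic[OF dv char3 a0 a3] k middle
        by (auto simp: legal_move_def nora_goal_rootless_cubic)
    next
      case 4
      then show ?thesis
        using rootless_cubic_choose_leading[OF dv a0] k
        by (auto simp: legal_move_def nora_goal_rootless_cubic)
    qed
  qed
  then show ?thesis by auto
qed

lemma nora_wins_moving_second:
  fixes v :: "'a::field \<Rightarrow> int"
  assumes dv: "discrete_valuation v" and char3: "(3::'a) = 0"
  shows "has_winning_strategy TYPE('a) 3 Wanda Nora"
proof -
  have start: "game_position 3 (\<lambda>_. None :: 'a option) (Suc (Suc (Suc (Suc 0))))"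
    using game_position_start[of 3] by (simp add: numeral_3_eq_3)
  have "win 3 (nora_goal 3) (Suc (Suc (Suc 0))) ((\<lambda>_. None)(i := Some x)) Nora Nora"
    if first: "legal_move 3 (\<lambda>_. None) i (x :: 'a)" for i x
  proof -
    define m :: nat where "m = (if i = 1 then 2 else 1)"
    define c where "c = ((\<lambda>_. None)(i := Some x))(m := Some (0 :: 'a))"
    have zero: "legal_move 3 ((\<lambda>_. None)(i := Some x)) m 0"
      unfolding m_def legal_move_def by simp
    have pos: "game_position 3 c (Suc (Suc 0))"
      using game_position_move[OF game_position_move[OF start first] zero] unfolding c_def .
    have "win 3 (nora_goal 3) (Suc 0) (c(j := Some y)) Nora Nora" if "legal_move 3 c j y" for j y
    proof -
      have "(c(j := Some y)) 1 = Some 0 \<or> (c(j := Some y)) 2 = Some 0"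
        using that unfolding c_def m_def legal_move_def by auto
      then show ?thesis using nora_last_move_rootless[OF dv char3 game_position_move[OF pos that]] by blast
    qed
    then show ?thesis using zero unfolding c_def by auto
  qed
  then show ?thesis unfolding has_winning_strategy_def by (simp add: numeral_eq_Suc)
qed

theorem lemma14:
  fixes v :: "'a::field \<Rightarrow> int" and first :: player
  assumes "complete_dvr_fraction_field v"
    and "CHAR('a) = 3"
  shows "has_winning_strategy TYPE('a) 3 first (last_mover 3 first)"
proof -
  have dv: "discrete_valuation v" using assms(1) unfolding complete_dvr_fraction_field_def by simp
  have char3: "(3::'a) = 0" using of_nat_CHAR[where 'a='a] assms(2) by simp
  show ?thesis
  proof (cases first)
    case Nora
    then show ?thesis
      using wanda_wins_moving_last[OF discrete_valuation_infinite[OF dv]] by (simp add: last_mover_def)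
  next
    case Wanda
    then show ?thesis using nora_wins_moving_second[OF dv char3] by (simp add: last_mover_def)
  qed
qed

end
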